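(* Let $p$ be a prime and $e > 0$. The distinct elementary divisors of $A_{p^e}$ are $p^i$ for $0 \le i \le e$, and the multiplicity of $p^i$ among the elementary divisors is $\phi(p^{e-i})$.
   Context: For a positive integer $k$, let $\Phi_d$ denote the $d$th cyclotomic polynomial and let $\Psi_k : \mathbf{Z}[X]/(X^k-1) \to \bigoplus_{d \mid k} \mathbf{Z}[X]/(\Phi_d(X))$ be the natural map $f \bmod (X^k-1) \mapsto \bigoplus_{d\mid k} f \bmod \Phi_d(X)$. Endow $\mathbf{Z}[X]/(X^k-1)$ with the basis $(1, \overline{X}, \dots, \overline{X}^{k-1})$, each $\mathbf{Z}[X]/(\Phi_d(X))$ with the basis $(1, \overline{X}, \dots, \overline{X}^{\phi(d)-1})$, and order the summands by increasing $d$. $A_k$ is the $k\times k$ integer matrix of $\Psi_k$ with respect to these bases. Elementary divisors are those of the Smith normal form over $\mathbf{Z}$, taken non-negative; $\phi$ is Euler's totient function. *)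

theory Defs
  imports Complex_Main "HOL-Computational_Algebra.Polynomial" "HOL-Number_Theory.Totient"
    "HOL-Library.Multiset" "Jordan_Normal_Form.Matrix"
begin

definition cyclo :: "nat \<Rightarrow> int poly" where
  "cyclo d = (THE q. map_poly of_int q =
      (\<Prod>k\<in>{k. k < d \<and> coprime k d}. [:- cis (2 * pi * real k / real d), 1:] :: complex poly))"

(* Remainder of f modulo the monic polynomial g in Z[X]. Since g is monic
   (lead coefficient 1), the pseudo-remainder is exactly the Euclidean remainder. *)
definition red_mod :: "int poly \<Rightarrow> int poly \<Rightarrow> int poly" where
  "red_mod f g = pseudo_mod f g"

definition blk_off :: "nat \<Rightarrow> nat \<Rightarrow> nat" where
  "blk_off k d = (\<Sum>d'\<in>{d'. d' dvd k \<and> d' < d}. totient d')"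

definition blk_of :: "nat \<Rightarrow> nat \<Rightarrow> nat" where
  "blk_of k r = (THE d. d dvd k \<and> blk_off k d \<le> r \<and> r < blk_off k d + totient d)"

(* The k x k matrix A_k of Psi_k: column j is the image of X^j; the rows of the
   d-block (d | k, ordered by increasing d) are the coefficients of
   X^j mod Phi_d with respect to 1, X, ..., X^(phi(d)-1). *)
definition A_mat :: "nat \<Rightarrow> int mat" where
  "A_mat k = mat k k (\<lambda>(r, j). let d = blk_of k r in
      coeff (red_mod (monom 1 j) (cyclo d)) (r - blk_off k d))"

definition smith_nf :: "int mat \<Rightarrow> int mat \<Rightarrow> bool" where
  "smith_nf M D \<longleftrightarrow> (\<exists>P Q. P \<in> carrier_mat (dim_row M) (dim_row M) \<and>
       Q \<in> carrier_mat (dim_col M) (dim_col M) \<and>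
       invertible_mat P \<and> invertible_mat Q \<and> D = P * M * Q) \<and>
     (\<forall>i j. i < dim_row D \<and> j < dim_col D \<and> i \<noteq> j \<longrightarrow> D $$ (i, j) = 0) \<and>
     (\<forall>i. i < min (dim_row D) (dim_col D) \<longrightarrow> D $$ (i, i) \<ge> 0) \<and>
     (\<forall>i. i + 1 < min (dim_row D) (dim_col D) \<longrightarrow> D $$ (i, i) dvd D $$ (i + 1, i + 1))"

definition elem_divs :: "int mat \<Rightarrow> int multiset" where
  "elem_divs D = mset (map (\<lambda>i. D $$ (i, i)) [0..<min (dim_row D) (dim_col D)])"

end

theory Submission
  imports Defs "Jordan_Normal_Form.Determinant"
begin

(* For m = p^e and every d dividing m, Phi_d divides X^m - 1, so reducing X^j modulo Phi_d only
   depends on j mod m, while Phi_(pm) = 1 + X^m + ... + X^((p-1)m). Hence A_(pm) has the block form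
   [[A', A_m], [I, -C]], where A' repeats the columns of A_m p - 1 times and C stacks p - 1
   identity matrices. A column operation with C turns the upper right block into A' C + A_m = p A_m
   and the lower right one into 0; row operations then give diag(I, p A_m). By induction A_(p^e)
   is unimodularly equivalent to the diagonal matrix with phi(p^(e-i)) entries p^i, which is in
   Smith form. Uniqueness: the product of the first k diagonal entries of a Smith form divides
   all k x k minors, and this divisibility survives multiplication by arbitrary matrices, so two
   Smith forms of a nonsingular matrix have the same leading products. *)

section \<open>Unimodular equivalence and uniqueness of Smith forms\<close>

(* Minors are taken along arbitrary index maps; non-injective maps only add zero minors. *)
definition minors_dvd :: "'a :: comm_ring_1 \<Rightarrow> nat \<Rightarrow> 'a mat \<Rightarrow> bool" where
  "minors_dvd c k A \<longleftrightarrow> (\<forall>f g. (\<forall>i<k. f i < dim_row A) \<longrightarrow> (\<forall>i<k. g i < dim_col A) \<longrightarrow>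
     c dvd det (mat k k (\<lambda>(i,j). A $$ (f i, g j))))"

lemma minors_dvd_mult_left:
  assumes X: "X \<in> carrier_mat r n" and B: "B \<in> carrier_mat n c" and m: "minors_dvd c0 k B"
  shows "minors_dvd c0 k (X * B)"
  unfolding minors_dvd_def
proof (intro allI impI)
  fix f g
  assume f: "\<forall>i<k. f i < dim_row (X * B)" and g: "\<forall>i<k. g i < dim_col (X * B)"
  define X' where "X' = mat k n (\<lambda>(i,l). X $$ (f i, l))"
  define B' where "B' = mat n k (\<lambda>(l,j). B $$ (l, g j))"
  have X': "X' \<in> carrier_mat k n" and B': "B' \<in> carrier_mat n k" by (auto simp: X'_def B'_def)
  have eq: "mat k k (\<lambda>(i,j). (X * B) $$ (f i, g j)) = X' * B'"
    by (rule eq_matI) (use f g X B in \<open>auto simp: X'_def B'_def scalar_prod_def intro!: sum.cong\<close>)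
  define F where "F = {h. (\<forall>i\<in>{0..<k}. h i \<in> {0..<n}) \<and> (\<forall>i. i \<notin> {0..<k} \<longrightarrow> h i = i)}"
  \<comment> \<open>Multilinearity in the rows expands the minor of \<open>X * B\<close> into minors of \<open>B\<close>.\<close>
  have "det (X' * B') = (\<Sum>h\<in>F. det (mat\<^sub>r k k (\<lambda>i. X' $$ (i, h i) \<cdot>\<^sub>v row B' (h i))))"
    unfolding mat_mul_finsum_alt[OF X' B'] F_def
    by (rule det_linear_rows_sum) (use B' in auto)
  also have "\<dots> = (\<Sum>h\<in>F. prod (\<lambda>i. X' $$ (i, h i)) {0..<k} * det (mat\<^sub>r k k (\<lambda>i. row B' (h i))))"
    by (rule sum.cong[OF refl], rule det_rows_mul) (use B' in auto)
  finally have expand: "det (X' * B') = \<dots>" .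
  have "c0 dvd det (mat\<^sub>r k k (\<lambda>i. row B' (h i)))" if h: "h \<in> F" for h
  proof -
    have "mat\<^sub>r k k (\<lambda>i. row B' (h i)) = mat k k (\<lambda>(i,j). B $$ (h i, g j))"
      by (rule eq_matI) (use h B' in \<open>auto simp: F_def B'_def\<close>)
    moreover have "c0 dvd det (mat k k (\<lambda>(i,j). B $$ (h i, g j)))"
      using m h B g X unfolding minors_dvd_def F_def by auto
    ultimately show ?thesis by simp
  qed
  then show "c0 dvd det (mat k k (\<lambda>(i,j). (X * B) $$ (f i, g j)))"
    unfolding eq expand by (auto intro!: dvd_sum dvd_mult)
qed

lemma minors_dvd_transpose:
  assumes "minors_dvd c k A"
  shows "minors_dvd c k (transpose_mat A)"
  unfolding minors_dvd_def
proof (intro allI impI)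
  fix f g
  assume f: "\<forall>i<k. f i < dim_row (transpose_mat A)" and g: "\<forall>i<k. g i < dim_col (transpose_mat A)"
  have "mat k k (\<lambda>(i,j). transpose_mat A $$ (f i, g j)) = transpose_mat (mat k k (\<lambda>(i,j). A $$ (g i, f j)))"
    by (rule eq_matI) (use f g in auto)
  moreover have "c dvd det (mat k k (\<lambda>(i,j). A $$ (g i, f j)))"
    using assms f g unfolding minors_dvd_def by auto
  moreover have "det (transpose_mat (mat k k (\<lambda>(i,j). A $$ (g i, f j)))) = det (mat k k (\<lambda>(i,j). A $$ (g i, f j)))"
    by (rule det_transpose) auto
  ultimately show "c dvd det (mat k k (\<lambda>(i,j). transpose_mat A $$ (f i, g j)))"
    by simp
qed

lemma minors_dvd_mult_right:
  assumes B: "B \<in> carrier_mat r n" and Y: "Y \<in> carrier_mat n c" and m: "minors_dvd c0 k B"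
  shows "minors_dvd c0 k (B * Y)"
proof -
  have "minors_dvd c0 k (transpose_mat Y * transpose_mat B)"
    by (rule minors_dvd_mult_left[of _ c n _ r]) (use B Y minors_dvd_transpose[OF m] in auto)
  then have "minors_dvd c0 k (transpose_mat (transpose_mat Y * transpose_mat B))"
    by (rule minors_dvd_transpose)
  then show ?thesis using transpose_mult[OF B Y] by (metis transpose_transpose)
qed

lemma prod_lessThan_dvd_prod_chain:
  fixes d :: "nat \<Rightarrow> 'a :: comm_semiring_1"
  assumes chain: "\<And>i j. i \<le> j \<Longrightarrow> j < n \<Longrightarrow> d i dvd d j"
    and "finite S" "S \<subseteq> {..<n}" "card S = k"
  shows "(\<Prod>i<k. d i) dvd (\<Prod>s\<in>S. d s)"
  using assms(2-)
proof (induction k arbitrary: S)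
  case 0 then show ?case by simp
next
  case (Suc k)
  define M where "M = Max S"
  have MS: "M \<in> S" using Suc by (auto simp: M_def intro!: Max_in)
  have "S \<subseteq> {..M}" using Suc by (auto simp: M_def)
  then have "card S \<le> Suc M" using card_mono[of "{..M}" S] by auto
  then have kM: "k \<le> M" using Suc by simp
  have IH: "(\<Prod>i<k. d i) dvd (\<Prod>s\<in>S - {M}. d s)"
    using Suc.IH[of "S - {M}"] Suc.prems MS by auto
  have "d k dvd d M" using chain kM MS Suc.prems by auto
  then have "d k * (\<Prod>i<k. d i) dvd d M * (\<Prod>s\<in>S - {M}. d s)"
    using IH by (rule mult_dvd_mono)
  then show ?case using Suc.prems MS by (simp add: prod.remove mult.commute)
qed

lemma minors_dvd_diag_chain:
  assumes D: "D \<in> carrier_mat n n"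
    and diag: "\<And>i j. i < n \<Longrightarrow> j < n \<Longrightarrow> i \<noteq> j \<Longrightarrow> D $$ (i,j) = 0"
    and chain: "\<And>i j. i \<le> j \<Longrightarrow> j < n \<Longrightarrow> D $$ (i,i) dvd D $$ (j,j)"
  shows "minors_dvd (\<Prod>i<k. D $$ (i,i)) k D"
  unfolding minors_dvd_def
proof (intro allI impI)
  fix f g
  assume f: "\<forall>i<k. f i < dim_row D" and g: "\<forall>i<k. g i < dim_col D"
  let ?M = "mat k k (\<lambda>(i,j). D $$ (f i, g j))"
  let ?c = "\<Prod>i<k. D $$ (i,i)"
  show "?c dvd det ?M"
  proof (cases "inj_on f {..<k}")
    case False
    then obtain i j where ij: "i < k" "j < k" "i \<noteq> j" "f i = f j" unfolding inj_on_def by auto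
    have "row ?M i = row ?M j" by (rule eq_vecI) (simp_all add: ij)
    then have "det ?M = 0" by (rule det_identical_rows[OF mat_carrier ij(3) ij(1) ij(2)])
    then show ?thesis by simp
  next
    case True
    have "?c dvd (\<Prod>s\<in>f ` {..<k}. D $$ (s,s))"
      by (rule prod_lessThan_dvd_prod_chain[OF chain]) (use f D True in \<open>auto simp: card_image\<close>)
    also have "\<dots> = (\<Prod>i<k. D $$ (f i, f i))" using True by (simp add: prod.reindex)
    finally have c_dvd: "?c dvd (\<Prod>i<k. D $$ (f i, f i))" .
    \<comment> \<open>Each term of the Leibniz expansion is either zero or a product of diagonal entries at the rows \<open>f i\<close>.\<close>
    have "?c dvd (\<Prod>i = 0..<k. ?M $$ (i, \<pi> i))" if \<pi>: "\<pi> permutes {0..<k}" for \<pi>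
    proof (cases "\<forall>i<k. f i = g (\<pi> i)")
      case True
      have "(\<Prod>i = 0..<k. ?M $$ (i, \<pi> i)) = (\<Prod>i<k. D $$ (f i, f i))"
        unfolding atLeast0LessThan
        by (rule prod.cong[OF refl]) (use True permutes_in_image[OF \<pi>] in auto)
      then show ?thesis using c_dvd by simp
    next
      case False
      then obtain i where i: "i < k" "f i \<noteq> g (\<pi> i)" by auto
      have "\<pi> i < k" using permutes_in_image[OF \<pi>, of i] i by simp
      then have "?M $$ (i, \<pi> i) = 0" using diag[of "f i" "g (\<pi> i)"] i f g D by simp
      then have "(\<Prod>i = 0..<k. ?M $$ (i, \<pi> i)) = 0" using i(1) by (intro prod_zero) auto
      then show ?thesis by simp
    qed
    then show ?thesis
      unfolding det_def'[of ?M k, OF mat_carrier] by (auto intro!: dvd_sum dvd_mult)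
  qed
qed

lemma det_leading_submatrix_diag:
  assumes "k \<le> n" and "\<And>i j. i < n \<Longrightarrow> j < n \<Longrightarrow> i \<noteq> j \<Longrightarrow> D $$ (i,j) = 0"
  shows "det (mat k k (\<lambda>(i,j). D $$ (i, j))) = (\<Prod>i<k. D $$ (i,i))"
proof -
  have "det (mat k k (\<lambda>(i,j). D $$ (i, j))) = prod_list (diag_mat (mat k k (\<lambda>(i,j). D $$ (i, j))))"
    by (rule det_upper_triangular) (use assms in \<open>auto simp: upper_triangular_def\<close>)
  also have "\<dots> = (\<Prod>i<k. D $$ (i,i))"
    by (simp add: diag_mat_def prod.distinct_set_conv_list[symmetric] atLeast0LessThan)
  finally show ?thesis .
qed

definition unimod_equiv :: "nat \<Rightarrow> 'a :: comm_ring_1 mat \<Rightarrow> 'a mat \<Rightarrow> bool" where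
  "unimod_equiv n M N \<longleftrightarrow> (\<exists>P P' Q Q'. P \<in> carrier_mat n n \<and> P' \<in> carrier_mat n n \<and>
     Q \<in> carrier_mat n n \<and> Q' \<in> carrier_mat n n \<and> P * P' = 1\<^sub>m n \<and> P' * P = 1\<^sub>m n \<and>
     Q * Q' = 1\<^sub>m n \<and> Q' * Q = 1\<^sub>m n \<and> N = P * M * Q)"

lemma unimod_equiv_refl: "M \<in> carrier_mat n n \<Longrightarrow> unimod_equiv n M M"
  unfolding unimod_equiv_def by (rule exI[of _ "1\<^sub>m n"])+ auto

lemma mult_mat_inverse_mult:
  fixes A B A' B' :: "'a :: semiring_1 mat"
  assumes "A \<in> carrier_mat n n" "B \<in> carrier_mat n n" "A' \<in> carrier_mat n n" "B' \<in> carrier_mat n n"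
    "A * A' = 1\<^sub>m n" "B * B' = 1\<^sub>m n"
  shows "(A * B) * (B' * A') = 1\<^sub>m n"
proof -
  have "(A * B) * (B' * A') = A * (B * (B' * A'))"
    by (rule assoc_mult_mat) (use assms in auto)
  also have "B * (B' * A') = (B * B') * A'"
    by (rule assoc_mult_mat[symmetric]) (use assms in auto)
  finally show ?thesis using assms by simp
qed

lemma assoc_mult_mat_sandwich:
  fixes R P M Q S :: "'a :: semiring_1 mat"
  assumes "R \<in> carrier_mat n n" "P \<in> carrier_mat n n" "M \<in> carrier_mat n n"
    "Q \<in> carrier_mat n n" "S \<in> carrier_mat n n"
  shows "R * (P * M * Q) * S = (R * P) * M * (Q * S)"
proof -
  have "R * (P * M * Q) = R * (P * M) * Q" by (rule assoc_mult_mat[symmetric]) (use assms in auto)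
  also have "R * (P * M) = R * P * M" by (rule assoc_mult_mat[symmetric]) (use assms in auto)
  finally have "R * (P * M * Q) * S = R * P * M * Q * S" by simp
  also have "\<dots> = (R * P * M) * (Q * S)" by (rule assoc_mult_mat) (use assms in auto)
  finally show ?thesis .
qed

lemma unimod_equiv_sym:
  assumes M: "M \<in> carrier_mat n n" and "unimod_equiv n M N"
  shows "unimod_equiv n N M"
proof -
  obtain P P' Q Q' where a: "P \<in> carrier_mat n n" "P' \<in> carrier_mat n n" "Q \<in> carrier_mat n n"
    "Q' \<in> carrier_mat n n" "P * P' = 1\<^sub>m n" "P' * P = 1\<^sub>m n" "Q * Q' = 1\<^sub>m n" "Q' * Q = 1\<^sub>m n"
    "N = P * M * Q"
    using assms unfolding unimod_equiv_def by blast
  have "P' * N * Q' = (P' * P) * M * (Q * Q')"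
    unfolding a(9) by (rule assoc_mult_mat_sandwich) (use a M in auto)
  then have "M = P' * N * Q'" using a M by simp
  then show ?thesis unfolding unimod_equiv_def using a by blast
qed

lemma unimod_equiv_trans:
  assumes M: "M \<in> carrier_mat n n" and "unimod_equiv n M N" and "unimod_equiv n N L"
  shows "unimod_equiv n M L"
proof -
  obtain P P' Q Q' where a: "P \<in> carrier_mat n n" "P' \<in> carrier_mat n n" "Q \<in> carrier_mat n n"
    "Q' \<in> carrier_mat n n" "P * P' = 1\<^sub>m n" "P' * P = 1\<^sub>m n" "Q * Q' = 1\<^sub>m n" "Q' * Q = 1\<^sub>m n"
    "N = P * M * Q"
    using assms unfolding unimod_equiv_def by blast
  obtain R R' S S' where b: "R \<in> carrier_mat n n" "R' \<in> carrier_mat n n" "S \<in> carrier_mat n n"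
    "S' \<in> carrier_mat n n" "R * R' = 1\<^sub>m n" "R' * R = 1\<^sub>m n" "S * S' = 1\<^sub>m n" "S' * S = 1\<^sub>m n"
    "L = R * N * S"
    using assms unfolding unimod_equiv_def by blast
  have "L = (R * P) * M * (Q * S)"
    unfolding b(9) a(9) by (rule assoc_mult_mat_sandwich) (use a b M in auto)
  moreover have "(R * P) * (P' * R') = 1\<^sub>m n" "(P' * R') * (R * P) = 1\<^sub>m n"
    "(Q * S) * (S' * Q') = 1\<^sub>m n" "(S' * Q') * (Q * S) = 1\<^sub>m n"
    by (rule mult_mat_inverse_mult[OF b(1) a(1) b(2) a(2) b(5) a(5)]
        mult_mat_inverse_mult[OF a(2) b(2) a(1) b(1) a(6) b(6)]
        mult_mat_inverse_mult[OF a(3) b(3) a(4) b(4) a(7) b(7)]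
        mult_mat_inverse_mult[OF b(4) a(4) b(3) a(3) b(8) a(8)])+
  moreover have "R * P \<in> carrier_mat n n" "P' * R' \<in> carrier_mat n n"
    "Q * S \<in> carrier_mat n n" "S' * Q' \<in> carrier_mat n n"
    using a b by auto
  ultimately show ?thesis unfolding unimod_equiv_def by blast
qed

lemma unimod_equiv_smult:
  assumes M: "M \<in> carrier_mat n n" and "unimod_equiv n M N"
  shows "unimod_equiv n (c \<cdot>\<^sub>m M) (c \<cdot>\<^sub>m N)"
proof -
  obtain P P' Q Q' where a: "P \<in> carrier_mat n n" "P' \<in> carrier_mat n n" "Q \<in> carrier_mat n n"
    "Q' \<in> carrier_mat n n" "P * P' = 1\<^sub>m n" "P' * P = 1\<^sub>m n" "Q * Q' = 1\<^sub>m n" "Q' * Q = 1\<^sub>m n"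
    "N = P * M * Q"
    using assms unfolding unimod_equiv_def by blast
  have "P * (c \<cdot>\<^sub>m M) = c \<cdot>\<^sub>m (P * M)" by (rule mult_smult_distrib) (use a M in auto)
  moreover have "(c \<cdot>\<^sub>m (P * M)) * Q = c \<cdot>\<^sub>m (P * M * Q)" by (rule mult_smult_assoc_mat) (use a M in auto)
  ultimately have "c \<cdot>\<^sub>m N = P * (c \<cdot>\<^sub>m M) * Q" using a by simp
  then show ?thesis unfolding unimod_equiv_def using a by blast
qed

lemma unimod_equiv_four_block_one:
  assumes M: "M \<in> carrier_mat n n" and "unimod_equiv n M N"
  shows "unimod_equiv (a + n) (four_block_mat (1\<^sub>m a) (0\<^sub>m a n) (0\<^sub>m n a) M)
    (four_block_mat (1\<^sub>m a) (0\<^sub>m a n) (0\<^sub>m n a) N)"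
proof -
  obtain P P' Q Q' where b: "P \<in> carrier_mat n n" "P' \<in> carrier_mat n n" "Q \<in> carrier_mat n n"
    "Q' \<in> carrier_mat n n" "P * P' = 1\<^sub>m n" "P' * P = 1\<^sub>m n" "Q * Q' = 1\<^sub>m n" "Q' * Q = 1\<^sub>m n"
    "N = P * M * Q"
    using assms unfolding unimod_equiv_def by blast
  let ?F = "\<lambda>X :: 'a mat. four_block_mat (1\<^sub>m a) (0\<^sub>m a n) (0\<^sub>m n a) X"
  have F_carrier: "X \<in> carrier_mat n n \<Longrightarrow> ?F X \<in> carrier_mat (a + n) (a + n)" for X by auto
  have F_mult: "X \<in> carrier_mat n n \<Longrightarrow> Y \<in> carrier_mat n n \<Longrightarrow> ?F X * ?F Y = ?F (X * Y)" for X Y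
    by (subst mult_four_block_mat[OF one_carrier_mat zero_carrier_mat zero_carrier_mat _
        one_carrier_mat zero_carrier_mat zero_carrier_mat])
       (auto simp: right_add_zero_mat[OF one_carrier_mat])
  have "?F N = ?F P * ?F M * ?F Q" using b M by (simp add: F_mult)
  moreover have "?F P * ?F P' = 1\<^sub>m (a + n)" "?F P' * ?F P = 1\<^sub>m (a + n)"
    "?F Q * ?F Q' = 1\<^sub>m (a + n)" "?F Q' * ?F Q = 1\<^sub>m (a + n)"
    using b by (simp_all add: F_mult)
  ultimately show ?thesis unfolding unimod_equiv_def using F_carrier b by blast
qed

lemma four_block_unitriangular_mult:
  fixes B B' :: "'a :: semiring_1 mat"
  assumes B: "B \<in> carrier_mat a b" and B': "B' \<in> carrier_mat a b"
  shows "four_block_mat (1\<^sub>m a) B (0\<^sub>m b a) (1\<^sub>m b) * four_block_mat (1\<^sub>m a) B' (0\<^sub>m b a) (1\<^sub>m b)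
    = four_block_mat (1\<^sub>m a) (B' + B) (0\<^sub>m b a) (1\<^sub>m b)"
proof -
  have "four_block_mat (1\<^sub>m a) B (0\<^sub>m b a) (1\<^sub>m b) * four_block_mat (1\<^sub>m a) B' (0\<^sub>m b a) (1\<^sub>m b)
    = four_block_mat (1\<^sub>m a * 1\<^sub>m a + B * 0\<^sub>m b a) (1\<^sub>m a * B' + B * 1\<^sub>m b)
        (0\<^sub>m b a * 1\<^sub>m a + 1\<^sub>m b * 0\<^sub>m b a) (0\<^sub>m b a * B' + 1\<^sub>m b * 1\<^sub>m b)"
    by (rule mult_four_block_mat[OF one_carrier_mat B zero_carrier_mat one_carrier_mat
          one_carrier_mat B' zero_carrier_mat one_carrier_mat])
  also have "\<dots> = four_block_mat (1\<^sub>m a) (B' + B) (0\<^sub>m b a) (1\<^sub>m b)"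
    using B B' by (simp add: right_add_zero_mat[OF one_carrier_mat] left_add_zero_mat)
  finally show ?thesis .
qed

lemma four_block_unitriangular_inverse:
  fixes B :: "'a :: ring_1 mat"
  assumes B: "B \<in> carrier_mat a b"
  shows "four_block_mat (1\<^sub>m a) B (0\<^sub>m b a) (1\<^sub>m b) * four_block_mat (1\<^sub>m a) (- B) (0\<^sub>m b a) (1\<^sub>m b) = 1\<^sub>m (a + b)"
    and "four_block_mat (1\<^sub>m a) (- B) (0\<^sub>m b a) (1\<^sub>m b) * four_block_mat (1\<^sub>m a) B (0\<^sub>m b a) (1\<^sub>m b) = 1\<^sub>m (a + b)"
proof -
  have "- B \<in> carrier_mat a b" using B by simp
  then show "four_block_mat (1\<^sub>m a) B (0\<^sub>m b a) (1\<^sub>m b) * four_block_mat (1\<^sub>m a) (- B) (0\<^sub>m b a) (1\<^sub>m b) = 1\<^sub>m (a + b)"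
    and "four_block_mat (1\<^sub>m a) (- B) (0\<^sub>m b a) (1\<^sub>m b) * four_block_mat (1\<^sub>m a) B (0\<^sub>m b a) (1\<^sub>m b) = 1\<^sub>m (a + b)"
    using B by (simp_all add: four_block_unitriangular_mult add_uminus_minus_mat)
qed

lemma four_block_swap_mult:
  "four_block_mat (0\<^sub>m a b) (1\<^sub>m a) (1\<^sub>m b) (0\<^sub>m b a) * four_block_mat (0\<^sub>m b a) (1\<^sub>m b) (1\<^sub>m a) (0\<^sub>m a b)
    = (1\<^sub>m (a + b) :: 'a :: semiring_1 mat)"
proof -
  have "four_block_mat (0\<^sub>m a b) (1\<^sub>m a) (1\<^sub>m b) (0\<^sub>m b a) * four_block_mat (0\<^sub>m b a) (1\<^sub>m b) (1\<^sub>m a) (0\<^sub>m a b)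
    = four_block_mat (0\<^sub>m a b * 0\<^sub>m b a + 1\<^sub>m a * 1\<^sub>m a) (0\<^sub>m a b * 1\<^sub>m b + 1\<^sub>m a * (0\<^sub>m a b :: 'a mat))
        (1\<^sub>m b * 0\<^sub>m b a + 0\<^sub>m b a * 1\<^sub>m a) (1\<^sub>m b * 1\<^sub>m b + 0\<^sub>m b a * 0\<^sub>m a b)"
    by (rule mult_four_block_mat) auto
  also have "\<dots> = 1\<^sub>m (a + b)"
    by (simp add: left_add_zero_mat[OF one_carrier_mat] right_add_zero_mat[OF zero_carrier_mat])
  finally show ?thesis .
qed

lemma unimod_equiv_four_block_eliminate:
  fixes X Y :: "'a :: comm_ring_1 mat"
  assumes X: "X \<in> carrier_mat m s" and Y: "Y \<in> carrier_mat m m"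
  shows "unimod_equiv (s + m) (four_block_mat X Y (1\<^sub>m s) (0\<^sub>m s m))
    (four_block_mat (1\<^sub>m s) (0\<^sub>m s m) (0\<^sub>m m s) Y)"
proof -
  define P where "P = four_block_mat (1\<^sub>m m) (- X) (0\<^sub>m s m) (1\<^sub>m s)"
  define P' where "P' = four_block_mat (1\<^sub>m m) X (0\<^sub>m s m) (1\<^sub>m s)"
  define R :: "'a mat" where "R = four_block_mat (0\<^sub>m s m) (1\<^sub>m s) (1\<^sub>m m) (0\<^sub>m m s)"
  define R' :: "'a mat" where "R' = four_block_mat (0\<^sub>m m s) (1\<^sub>m m) (1\<^sub>m s) (0\<^sub>m s m)"
  have ms: "m + s = s + m" by simp
  have carrier: "P \<in> carrier_mat (s + m) (s + m)" "P' \<in> carrier_mat (s + m) (s + m)"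
    "R \<in> carrier_mat (s + m) (s + m)" "R' \<in> carrier_mat (s + m) (s + m)"
    "four_block_mat X Y (1\<^sub>m s) (0\<^sub>m s m) \<in> carrier_mat (s + m) (s + m)"
    unfolding P_def P'_def R_def R'_def using X Y by (auto simp: ms)
  have inverses: "P * P' = 1\<^sub>m (s + m)" "P' * P = 1\<^sub>m (s + m)" "R * R' = 1\<^sub>m (s + m)" "R' * R = 1\<^sub>m (s + m)"
    unfolding P_def P'_def R_def R'_def
    using four_block_unitriangular_inverse[OF X] four_block_swap_mult[of s m] four_block_swap_mult[of m s]
    by (simp_all add: ms)
  have mX: "- X \<in> carrier_mat m s" using X by simp
  have PM: "P * four_block_mat X Y (1\<^sub>m s) (0\<^sub>m s m) = four_block_mat (0\<^sub>m m s) Y (1\<^sub>m s) (0\<^sub>m s m)"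
    unfolding P_def mult_four_block_mat[OF one_carrier_mat mX zero_carrier_mat one_carrier_mat
      X Y one_carrier_mat zero_carrier_mat]
    using X Y by (simp add: add_uminus_minus_mat right_add_zero_mat[OF Y])
  have "R * (P * four_block_mat X Y (1\<^sub>m s) (0\<^sub>m s m)) = four_block_mat (1\<^sub>m s) (0\<^sub>m s m) (0\<^sub>m m s) Y"
    unfolding PM R_def mult_four_block_mat[OF zero_carrier_mat one_carrier_mat one_carrier_mat zero_carrier_mat
      zero_carrier_mat Y one_carrier_mat zero_carrier_mat]
    using Y by (simp add: left_add_zero_mat right_add_zero_mat[OF Y])
  moreover have "R * (P * four_block_mat X Y (1\<^sub>m s) (0\<^sub>m s m)) =
      (R * P) * four_block_mat X Y (1\<^sub>m s) (0\<^sub>m s m) * 1\<^sub>m (s + m)"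
  proof -
    have "R * P * four_block_mat X Y (1\<^sub>m s) (0\<^sub>m s m) \<in> carrier_mat (s + m) (s + m)"
      using carrier by auto
    from right_mult_one_mat[OF this] show ?thesis
      using assoc_mult_mat[OF carrier(3,1,5)] by simp
  qed
  moreover have "(R * P) * (P' * R') = 1\<^sub>m (s + m)" "(P' * R') * (R * P) = 1\<^sub>m (s + m)"
    by (rule mult_mat_inverse_mult[OF carrier(3,1,4,2) inverses(3,1)]
        mult_mat_inverse_mult[OF carrier(2,4,1,3) inverses(2,4)])+
  moreover have "R * P \<in> carrier_mat (s + m) (s + m)" "P' * R' \<in> carrier_mat (s + m) (s + m)"
    using carrier by auto
  moreover have "1\<^sub>m (s + m) * 1\<^sub>m (s + m) = (1\<^sub>m (s + m) :: 'a mat)" by simp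
  ultimately show ?thesis
    unfolding unimod_equiv_def by (metis one_carrier_mat)
qed

lemma unimod_equiv_leading_prod_dvd:
  assumes equiv: "unimod_equiv n D1 D2" and D1: "D1 \<in> carrier_mat n n" and D2: "D2 \<in> carrier_mat n n"
    and diag1: "\<And>i j. i < n \<Longrightarrow> j < n \<Longrightarrow> i \<noteq> j \<Longrightarrow> D1 $$ (i,j) = 0"
    and chain1: "\<And>i j. i \<le> j \<Longrightarrow> j < n \<Longrightarrow> D1 $$ (i,i) dvd D1 $$ (j,j)"
    and diag2: "\<And>i j. i < n \<Longrightarrow> j < n \<Longrightarrow> i \<noteq> j \<Longrightarrow> D2 $$ (i,j) = 0"
    and k: "k \<le> n"
  shows "(\<Prod>i<k. D1 $$ (i,i)) dvd (\<Prod>i<k. D2 $$ (i,i))"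
proof -
  obtain P Q where PQ: "P \<in> carrier_mat n n" "Q \<in> carrier_mat n n" "D2 = P * D1 * Q"
    using equiv unfolding unimod_equiv_def by blast
  have "minors_dvd (\<Prod>i<k. D1 $$ (i,i)) k (P * D1 * Q)"
    using minors_dvd_diag_chain[OF D1 diag1 chain1]
    by (intro minors_dvd_mult_right[OF _ PQ(2)] minors_dvd_mult_left[OF PQ(1) D1]) (use PQ D1 in auto)
  then have "(\<Prod>i<k. D1 $$ (i,i)) dvd det (mat k k (\<lambda>(i,j). D2 $$ (i, j)))"
    unfolding minors_dvd_def PQ(3)[symmetric] using D2 k
    by (auto dest!: spec[of _ "\<lambda>i. i"])
  then show ?thesis using det_leading_submatrix_diag[OF k diag2] by simp
qed

lemma dvd_chain_of_succ:
  fixes f :: "nat \<Rightarrow> 'a :: comm_monoid_mult"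
  assumes "\<And>i. i + 1 < n \<Longrightarrow> f i dvd f (i + 1)" and "i \<le> j" and "j < n"
  shows "f i dvd f j"
  using assms(2,3)
proof (induction j)
  case (Suc j)
  then show ?case using assms(1)[of j] by (cases "i = Suc j") (auto intro: dvd_trans)
qed simp

lemma eq_of_prod_lessThan_eq:
  fixes a b :: "nat \<Rightarrow> 'a :: idom"
  assumes eq: "\<And>k. k \<le> n \<Longrightarrow> (\<Prod>i<k. a i) = (\<Prod>i<k. b i)"
    and nonzero: "\<And>i. i < n \<Longrightarrow> b i \<noteq> 0" and i: "i < n"
  shows "a i = b i"
proof -
  have "(\<Prod>i<i. b i) * a i = (\<Prod>i<i. b i) * b i"
    using eq[of "Suc i"] eq[of i] i by simp
  moreover have "(\<Prod>i<i. b i) \<noteq> 0" using nonzero i by (simp add: prod_zero_iff)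
  ultimately show ?thesis by simp
qed

lemma invertible_mat_obtain_inverse:
  fixes P :: "'a :: semiring_1 mat"
  assumes P: "P \<in> carrier_mat n n" and "invertible_mat P"
  obtains P' where "P' \<in> carrier_mat n n" "P * P' = 1\<^sub>m n" "P' * P = 1\<^sub>m n"
proof -
  obtain B where B: "inverts_mat P B" "inverts_mat B P"
    using assms(2) unfolding invertible_mat_def by blast
  have PB: "P * B = 1\<^sub>m n" using B(1) P unfolding inverts_mat_def by simp
  have BP: "B * P = 1\<^sub>m (dim_row B)" using B(2) unfolding inverts_mat_def .
  have "dim_col B = n" using arg_cong[OF PB, of dim_col] by simp
  moreover have "dim_row B = n" using arg_cong[OF BP, of dim_col] P by simp
  ultimately show thesis using that PB BP by auto
qed

lemma smith_nf_unimod_equiv: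
  assumes "smith_nf M D" and M: "M \<in> carrier_mat n n"
  shows "unimod_equiv n M D"
proof -
  obtain P Q where PQ: "P \<in> carrier_mat n n" "Q \<in> carrier_mat n n" "invertible_mat P" "invertible_mat Q"
    "D = P * M * Q"
    using assms unfolding smith_nf_def by auto
  obtain P' where "P' \<in> carrier_mat n n" "P * P' = 1\<^sub>m n" "P' * P = 1\<^sub>m n"
    using invertible_mat_obtain_inverse[OF PQ(1,3)] .
  moreover obtain Q' where "Q' \<in> carrier_mat n n" "Q * Q' = 1\<^sub>m n" "Q' * Q = 1\<^sub>m n"
    using invertible_mat_obtain_inverse[OF PQ(2,4)] .
  ultimately show ?thesis using PQ unfolding unimod_equiv_def by blast
qed

lemma smith_nf_diag_chain:
  assumes "smith_nf M D" and M: "M \<in> carrier_mat n n"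
  shows "D \<in> carrier_mat n n"
    and "\<And>i j. i < n \<Longrightarrow> j < n \<Longrightarrow> i \<noteq> j \<Longrightarrow> D $$ (i,j) = 0"
    and "\<And>i. i < n \<Longrightarrow> 0 \<le> D $$ (i,i)"
    and "\<And>i j. i \<le> j \<Longrightarrow> j < n \<Longrightarrow> D $$ (i,i) dvd D $$ (j,j)"
proof -
  obtain P Q where "P \<in> carrier_mat n n" "Q \<in> carrier_mat n n" "D = P * M * Q"
    using smith_nf_unimod_equiv[OF assms] unfolding unimod_equiv_def by blast
  then show D: "D \<in> carrier_mat n n" using M by simp
  show "\<And>i j. i < n \<Longrightarrow> j < n \<Longrightarrow> i \<noteq> j \<Longrightarrow> D $$ (i,j) = 0"
    and "\<And>i. i < n \<Longrightarrow> 0 \<le> D $$ (i,i)"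
    using assms(1) D unfolding smith_nf_def by auto
  show "\<And>i j. i \<le> j \<Longrightarrow> j < n \<Longrightarrow> D $$ (i,i) dvd D $$ (j,j)"
    by (rule dvd_chain_of_succ[of n "\<lambda>i. D $$ (i,i)"]) (use assms(1) D in \<open>auto simp: smith_nf_def\<close>)
qed

lemma smith_nfI:
  assumes M: "M \<in> carrier_mat n n" and equiv: "unimod_equiv n M D" and D: "D \<in> carrier_mat n n"
    and "\<And>i j. i < n \<Longrightarrow> j < n \<Longrightarrow> i \<noteq> j \<Longrightarrow> D $$ (i,j) = 0"
    and "\<And>i. i < n \<Longrightarrow> 0 \<le> D $$ (i,i)"
    and "\<And>i. i + 1 < n \<Longrightarrow> D $$ (i,i) dvd D $$ (i + 1, i + 1)"
  shows "smith_nf M D"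
proof -
  have invertible: "invertible_mat P" if "P \<in> carrier_mat n n" "P' \<in> carrier_mat n n"
    "P * P' = 1\<^sub>m n" "P' * P = 1\<^sub>m n" for P P' :: "int mat"
    using that unfolding invertible_mat_def inverts_mat_def by auto
  obtain P P' Q Q' where "P \<in> carrier_mat n n" "P' \<in> carrier_mat n n" "Q \<in> carrier_mat n n"
    "Q' \<in> carrier_mat n n" "P * P' = 1\<^sub>m n" "P' * P = 1\<^sub>m n" "Q * Q' = 1\<^sub>m n" "Q' * Q = 1\<^sub>m n"
    "D = P * M * Q"
    using equiv unfolding unimod_equiv_def by blast
  with invertible have "\<exists>P Q. P \<in> carrier_mat n n \<and> Q \<in> carrier_mat n n \<and>
      invertible_mat P \<and> invertible_mat Q \<and> D = P * M * Q" by blast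
  then show ?thesis using assms unfolding smith_nf_def by auto
qed

lemma smith_nf_elem_divs_unique:
  assumes M: "M \<in> carrier_mat n n" and S1: "smith_nf M D1" and S2: "smith_nf M D2"
    and nonzero: "\<And>i. i < n \<Longrightarrow> D1 $$ (i,i) \<noteq> 0"
  shows "elem_divs D2 = elem_divs D1"
proof -
  note D1 = smith_nf_diag_chain[OF S1 M] and D2 = smith_nf_diag_chain[OF S2 M]
  have equiv: "unimod_equiv n D1 D2"
    by (rule unimod_equiv_trans[OF D1(1) unimod_equiv_sym]) (use M S1 S2 smith_nf_unimod_equiv in auto)
  have "(\<Prod>i<k. D2 $$ (i,i)) = (\<Prod>i<k. D1 $$ (i,i))" if k: "k \<le> n" for k
  proof (rule zdvd_antisym_nonneg)
    show "0 \<le> (\<Prod>i<k. D2 $$ (i,i))" "0 \<le> (\<Prod>i<k. D1 $$ (i,i))"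
      using D1(3) D2(3) k by (auto intro!: prod_nonneg)
    show "(\<Prod>i<k. D1 $$ (i,i)) dvd (\<Prod>i<k. D2 $$ (i,i))"
      by (rule unimod_equiv_leading_prod_dvd[OF equiv D1(1) D2(1) D1(2,4) D2(2) k])
    show "(\<Prod>i<k. D2 $$ (i,i)) dvd (\<Prod>i<k. D1 $$ (i,i))"
      by (rule unimod_equiv_leading_prod_dvd[OF unimod_equiv_sym[OF D1(1) equiv] D2(1) D1(1) D2(2,4) D1(2) k])
  qed
  then have "D2 $$ (i, i) = D1 $$ (i, i)" if "i < n" for i
    by (rule eq_of_prod_lessThan_eq[of n, OF _ nonzero that])
  then have diag_eq: "map (\<lambda>i. D2 $$ (i, i)) [0..<n] = map (\<lambda>i. D1 $$ (i, i)) [0..<n]"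
    by (intro map_cong) auto
  have "dim_row D1 = n" "dim_col D1 = n" "dim_row D2 = n" "dim_col D2 = n"
    using D1(1) D2(1) by auto
  then show ?thesis by (simp only: elem_divs_def min.idem diag_eq)
qed

section \<open>Cyclotomic polynomials of prime powers\<close>

definition geom_poly :: "nat \<Rightarrow> nat \<Rightarrow> 'a :: comm_ring_1 poly" where
  "geom_poly p m = (\<Sum>a<p. monom 1 (a * m))"

lemma coeff_geom_poly:
  assumes "m > 0"
  shows "coeff (geom_poly p m :: 'a :: comm_ring_1 poly) k = (if m dvd k \<and> k < p * m then 1 else 0)"
proof -
  have "coeff (geom_poly p m :: 'a poly) k =
      (\<Sum>a<p. if a = k div m then (if m dvd k then 1 else 0) else (0::'a))"
    unfolding geom_poly_def coeff_sum
    by (rule sum.cong[OF refl]) (use assms in \<open>auto simp: coeff_monom\<close>)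
  also have "\<dots> = (if k div m < p then (if m dvd k then 1 else 0) else 0)"
    by (simp add: sum.delta)
  finally show ?thesis
    using div_less_iff_less_mult[OF assms, of k p] by (auto simp: mult.commute)
qed

lemma degree_geom_poly:
  assumes "m > 0" "p > 0"
  shows "degree (geom_poly p m :: 'a :: comm_ring_1 poly) = (p - 1) * m"
    and "lead_coeff (geom_poly p m :: 'a :: comm_ring_1 poly) = 1"
proof -
  have top: "coeff (geom_poly p m :: 'a poly) ((p - 1) * m) = 1"
    using assms by (simp add: coeff_geom_poly)
  have "coeff (geom_poly p m :: 'a poly) k = 0" if "(p - 1) * m < k" for k
  proof -
    have "\<not> (m dvd k \<and> k < p * m)"
    proof
      assume "m dvd k \<and> k < p * m"
      then obtain c where c: "k = c * m" "c * m < p * m" by (auto elim!: dvdE simp: mult.commute)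
      then have "p - 1 < c" "c < p" using that by simp_all
      then show False by simp
    qed
    then show ?thesis using assms by (simp add: coeff_geom_poly)
  qed
  then have "degree (geom_poly p m :: 'a poly) \<le> (p - 1) * m" by (intro degree_le) auto
  then show deg: "degree (geom_poly p m :: 'a poly) = (p - 1) * m"
    using le_degree[of "geom_poly p m :: 'a poly" "(p - 1) * m"] top by fastforce
  show "lead_coeff (geom_poly p m :: 'a poly) = 1" using top deg by simp
qed

lemma map_poly_of_int_geom_poly: "map_poly (of_int :: int \<Rightarrow> 'a :: comm_ring_1) (geom_poly p m) = geom_poly p m"
  by (rule poly_eqI) (auto simp: coeff_map_poly geom_poly_def coeff_sum intro!: sum.cong)

lemma poly_geom_poly_eq_0:
  fixes z :: "'a :: idom"
  assumes "(z ^ m) ^ p = 1" and "z ^ m \<noteq> 1"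
  shows "poly (geom_poly p m) z = 0"
proof -
  have "poly (geom_poly p m) z = (\<Sum>a<p. (z ^ m) ^ a)"
    unfolding geom_poly_def poly_sum poly_monom by (simp add: mult.commute[of _ m] power_mult)
  moreover have "(z ^ m - 1) * (\<Sum>a<p. (z ^ m) ^ a) = 0"
    using power_diff_1_eq[of "z ^ m" p] assms(1) by simp
  ultimately show ?thesis using assms(2) by simp
qed

lemma cyclo_eqI:
  assumes "map_poly of_int q =
    (\<Prod>k\<in>{k. k < d \<and> coprime k d}. [:- cis (2 * pi * real k / real d), 1:] :: complex poly)"
  shows "cyclo d = q"
  unfolding cyclo_def
proof (rule the_equality)
  fix q'
  assume "map_poly of_int q' =
    (\<Prod>k\<in>{k. k < d \<and> coprime k d}. [:- cis (2 * pi * real k / real d), 1:] :: complex poly)"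
  then have "map_poly (of_int :: int \<Rightarrow> complex) q' = map_poly of_int q" using assms by simp
  then show "q' = q" by (intro poly_eqI) (metis coeff_map_poly of_int_0 of_int_eq_iff)
qed (fact assms)

lemma cyclo_1: "cyclo 1 = [:-1, 1:]"
  by (rule cyclo_eqI) (auto intro!: poly_eqI simp: coeff_map_poly coeff_pCons split: nat.splits)

lemma prod_linear_factors_dvd:
  fixes q :: "'a :: idom poly"
  assumes "finite T" "inj_on r T" "\<forall>t\<in>T. poly q (r t) = 0"
  shows "(\<Prod>t\<in>T. [:- r t, 1:]) dvd q"
  using assms
proof (induction T arbitrary: q rule: finite_induct)
  case (insert x F)
  then obtain h where h: "q = (\<Prod>t\<in>F. [:- r t, 1:]) * h"
    by (auto elim!: dvdE simp: inj_on_insert)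
  have "poly (\<Prod>t\<in>F. [:- r t, 1:]) (r x) \<noteq> 0"
    using insert by (auto simp: poly_prod inj_on_def)
  then have "poly h (r x) = 0" using insert h by simp
  then have "[:- r x, 1:] dvd h" by (simp add: dvd_iff_poly_eq_0)
  then have "[:- r x, 1:] * (\<Prod>t\<in>F. [:- r t, 1:]) dvd h * (\<Prod>t\<in>F. [:- r t, 1:])"
    by (rule mult_dvd_mono) simp
  then show ?case using insert(1,2) h by (simp add: mult.commute)
qed simp

lemma monic_dvd_eq:
  fixes P q :: "'a :: idom poly"
  assumes "P dvd q" "lead_coeff P = 1" "lead_coeff q = 1" "degree P = degree q"
  shows "P = q"
proof -
  obtain c where c: "q = P * c" using assms(1) by (auto elim!: dvdE)
  have "P \<noteq> 0" "c \<noteq> 0" using assms(2,3) c by auto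
  then have "degree c = 0" using c assms(4) degree_mult_eq[of P c] by simp
  then obtain c0 where "c = [:c0:]" by (metis degree_eq_zeroE)
  then have q: "q = Polynomial.smult c0 P" using c by simp
  then have "c0 = 1" using assms(2,3) by (cases "c0 = 0") auto
  then show ?thesis using q by simp
qed

lemma card_coprime_lessThan_eq_totient: "card {k. k < n \<and> coprime k n} = totient n"
proof (cases "n \<le> 1")
  case True
  then have "n = 0 \<or> n = 1" by auto
  then show ?thesis by auto
next
  case False
  have "k \<noteq> 0" if "coprime k n" for k
    using that False by (metis coprime_0_left_iff nat_dvd_1_iff_1 le_refl)
  moreover have "k \<noteq> n" if "coprime k n" for k
    using that False by (metis coprime_self nat_dvd_1_iff_1 le_refl)
  ultimately have "{k. k < n \<and> coprime k n} = totatives n"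
    by (auto simp: in_totatives_iff order.order_iff_strict)
  then show ?thesis by (simp add: totient_def)
qed

lemma cyclo_prime_power:
  assumes p: "prime p"
  shows "cyclo (p ^ Suc i) = geom_poly p (p ^ i)"
proof (rule cyclo_eqI)
  define m where "m = p ^ i"
  define n where "n = p ^ Suc i"
  define S where "S = {k. k < n \<and> coprime k n}"
  define z where "z = (\<lambda>k::nat. cis (2 * pi * real k / real n))"
  have p1: "p > 1" using p prime_gt_1_nat by blast
  have m0: "m > 0" and nm: "n = p * m" using p1 by (simp_all add: m_def n_def)
  have "2 * 1 \<le> p * m" by (rule mult_le_mono) (use p1 m0 in auto)
  then have n2: "n \<ge> 2" by (simp add: nm)
  have "inj_on z {..<n}"
    using bij_betw_roots_unity[of n] n2 unfolding bij_betw_def z_def by simp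
  then have inj: "inj_on z S" by (rule inj_on_subset) (auto simp: S_def)
  \<comment> \<open>For a primitive \<open>n\<close>-th root of unity \<open>z\<close>, \<open>z ^ m\<close> is a nontrivial \<open>p\<close>-th root of unity.\<close>
  have "poly (geom_poly p m :: complex poly) (z k) = 0" if k: "k \<in> S" for k
  proof (rule poly_geom_poly_eq_0)
    define w where "w = cis (2 * pi * real k / real p)"
    have "real m * (2 * pi * real k / real n) = 2 * pi * real k / real p"
      using m0 nm by (simp add: field_simps)
    then have zw: "z k ^ m = w" unfolding z_def w_def DeMoivre by simp
    have "real p * (2 * pi * real k / real p) = 2 * pi * real k"
      using p1 by (simp add: field_simps)
    then have "w ^ p = 1" unfolding w_def DeMoivre by simp
    then show "(z k ^ m) ^ p = 1" by (simp add: zw)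
    show "z k ^ m \<noteq> 1"
    proof
      assume "z k ^ m = 1"
      then have "cos (2 * pi * real k / real p) = 1" unfolding zw w_def by (simp add: complex_eq_iff)
      then obtain j :: int where "2 * pi * real k / real p = j * 2 * pi" by (auto simp: cos_one_2pi_int)
      then have "real k = real p * j" using p1 by (simp add: field_simps)
      then have "real_of_int (int k) = real_of_int (int p * j)" by simp
      then have "int p dvd int k" by (simp only: of_int_eq_iff) simp
      then have "p dvd k" by simp
      moreover have "coprime k n" using k by (simp add: S_def)
      ultimately have "p = 1" using coprime_common_divisor_nat[of k n p] by (simp add: nm)
      then show False using p1 by simp
    qed
  qed
  then have "(\<Prod>k\<in>S. [:- z k, 1:]) dvd geom_poly p m"
    by (intro prod_linear_factors_dvd inj) (auto simp: S_def)
  moreover have "degree (geom_poly p m :: complex poly) = card S"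
    using degree_geom_poly(1)[OF m0, of p] p1 totient_prime_power_Suc[OF p, of i]
    unfolding S_def card_coprime_lessThan_eq_totient by (simp add: n_def m_def mult.commute)
  moreover have "degree (\<Prod>k\<in>S. [:- z k, 1:]) = card S"
    by (subst degree_prod_sum_eq) auto
  moreover have "lead_coeff (\<Prod>k\<in>S. [:- z k, 1:]) = 1" by (simp add: lead_coeff_prod)
  moreover have "lead_coeff (geom_poly p m :: complex poly) = 1"
    using degree_geom_poly(2)[OF m0, of p] p1 by simp
  ultimately have "(\<Prod>k\<in>S. [:- z k, 1:]) = geom_poly p m"
    by (intro monic_dvd_eq) auto
  then show "map_poly of_int (geom_poly p (p ^ i)) =
      (\<Prod>k\<in>{k. k < p ^ Suc i \<and> coprime k (p ^ Suc i)}. [:- cis (2 * pi * real k / real (p ^ Suc i)), 1:])"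
    by (simp add: map_poly_of_int_geom_poly S_def z_def m_def n_def)
qed

lemma cyclo_prime_power_cases:
  assumes p: "prime p" and d: "d dvd p ^ e"
  shows "d = 1 \<and> cyclo d = [:-1, 1:] \<or> (\<exists>i. d = p ^ Suc i \<and> cyclo d = geom_poly p (p ^ i))"
proof -
  obtain j where "d = p ^ j" using divides_primepow_nat[OF p] d by auto
  then show ?thesis using cyclo_1 cyclo_prime_power[OF p] by (cases j) auto
qed

lemma lead_coeff_cyclo_prime_power:
  assumes p: "prime p" and d: "d dvd p ^ e"
  shows "lead_coeff (cyclo d) = 1"
  using cyclo_prime_power_cases[OF assms] degree_geom_poly(2)[of "p ^ _" p] prime_gt_0_nat[OF p]
  by auto

lemma cyclo_prime_power_dvd_monom_minus_1:
  assumes p: "prime p" and d: "d dvd p ^ e"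
  shows "cyclo d dvd monom 1 d - 1"
  using cyclo_prime_power_cases[OF assms]
proof
  assume "d = 1 \<and> cyclo d = [:-1, 1:]"
  moreover have "monom (1::int) 1 - 1 = [:-1, 1:]"
    by (rule poly_eqI) (auto simp: coeff_monom coeff_pCons split: nat.splits)
  ultimately show ?thesis by (metis dvd_refl)
next
  assume "\<exists>i. d = p ^ Suc i \<and> cyclo d = geom_poly p (p ^ i)"
  then obtain i where i: "d = p ^ Suc i" "cyclo d = geom_poly p (p ^ i)" by blast
  have "monom (1::int) d - 1 = monom 1 (p ^ i) ^ p - 1"
    using i by (simp add: monom_power mult.commute)
  also have "\<dots> = (monom 1 (p ^ i) - 1) * geom_poly p (p ^ i)"
    unfolding power_diff_1_eq geom_poly_def by (simp add: monom_power mult.commute)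
  finally show ?thesis using i by simp
qed

section \<open>Reduction modulo a monic polynomial\<close>

lemma red_mod_divmod:
  fixes f g :: "int poly"
  assumes g: "lead_coeff g = 1"
  obtains q where "f = g * q + red_mod f g" and "red_mod f g = 0 \<or> degree (red_mod f g) < degree g"
proof -
  obtain q r where qr: "pseudo_divmod f g = (q, r)" by (cases "pseudo_divmod f g")
  have "g \<noteq> 0" using g by auto
  with pseudo_divmod[OF this qr] g have "f = g * q + r" "r = 0 \<or> degree r < degree g" by auto
  moreover have "red_mod f g = r" by (simp add: red_mod_def pseudo_mod_def qr)
  ultimately show thesis using that by metis
qed

lemma red_mod_unique:
  fixes f g q r :: "int poly"
  assumes g: "lead_coeff g = 1" and f: "f = g * q + r" and r: "r = 0 \<or> degree r < degree g"
  shows "red_mod f g = r"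
proof (rule ccontr)
  assume ne: "red_mod f g \<noteq> r"
  obtain q' where q': "f = g * q' + red_mod f g"
    and r': "red_mod f g = 0 \<or> degree (red_mod f g) < degree g"
    using red_mod_divmod[OF g] by blast
  have eq: "g * (q - q') = red_mod f g - r" using f q' by (simp add: algebra_simps)
  then have "q - q' \<noteq> 0" using ne by auto
  then have "degree (red_mod f g - r) \<ge> degree g"
    unfolding eq[symmetric] using g by (subst degree_mult_eq) auto
  moreover have "degree (red_mod f g - r) < degree g"
  proof (cases "degree g = 0")
    case True
    then show ?thesis using r r' ne by auto
  next
    case False
    then show ?thesis using r r' degree_diff_le_max[of "red_mod f g" r] by auto
  qed
  ultimately show False by simp
qed

lemma red_mod_cong:
  fixes f1 f2 g :: "int poly"
  assumes g: "lead_coeff g = 1" and "g dvd f1 - f2"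
  shows "red_mod f1 g = red_mod f2 g"
proof -
  obtain q2 where q2: "f2 = g * q2 + red_mod f2 g"
    and r2: "red_mod f2 g = 0 \<or> degree (red_mod f2 g) < degree g"
    using red_mod_divmod[OF g] by blast
  obtain h where "f1 - f2 = g * h" using assms(2) by (auto elim!: dvdE)
  then have "f1 = g * (q2 + h) + red_mod f2 g" using q2 by (simp add: algebra_simps)
  then show ?thesis using red_mod_unique[OF g _ r2] by blast
qed

lemma monom_minus_1_dvd:
  assumes "d dvd m"
  shows "monom (1 :: 'a :: comm_ring_1) d - 1 dvd monom 1 m - 1"
proof -
  obtain c where "m = d * c" using assms by (auto elim!: dvdE)
  then have "monom (1 :: 'a) m - 1 = monom 1 d ^ c - 1" by (simp add: monom_power)
  then show ?thesis using power_diff_1_eq[of "monom (1 :: 'a) d" c] by simp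
qed

lemma monom_minus_1_dvd_monom_diff_mod:
  "monom (1 :: 'a :: comm_ring_1) m - 1 dvd monom 1 j - monom 1 (j mod m)"
proof -
  have "monom (1 :: 'a) j - monom 1 (j mod m) = monom 1 (j mod m) * (monom 1 m ^ (j div m) - 1)"
    by (simp add: monom_power mult_monom right_diff_distrib)
  moreover have "monom (1 :: 'a) m - 1 dvd monom 1 m ^ (j div m) - 1"
    using power_diff_1_eq[of "monom (1 :: 'a) m" "j div m"] by simp
  ultimately show ?thesis by simp
qed

lemma red_mod_cyclo_prime_power_monom_mod:
  assumes p: "prime p" and d: "d dvd p ^ e"
  shows "red_mod (monom 1 j) (cyclo d) = red_mod (monom 1 (j mod p ^ e)) (cyclo d)"
  using lead_coeff_cyclo_prime_power[OF p d]
proof (rule red_mod_cong)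
  show "cyclo d dvd monom 1 j - monom 1 (j mod p ^ e)"
    using cyclo_prime_power_dvd_monom_minus_1[OF p d] monom_minus_1_dvd[OF d]
      monom_minus_1_dvd_monom_diff_mod by (blast intro: dvd_trans)
qed

section \<open>The row blocks of \<open>A_mat\<close>\<close>

lemma blk_off_add_totient_le:
  assumes "d1 dvd k" and "d1 < d2"
  shows "blk_off k d1 + totient d1 \<le> blk_off k d2"
proof -
  have "blk_off k d1 + totient d1 = (\<Sum>d'\<in>insert d1 {d'. d' dvd k \<and> d' < d1}. totient d')"
    unfolding blk_off_def by (subst sum.insert) auto
  also have "\<dots> \<le> blk_off k d2"
    unfolding blk_off_def by (rule sum_mono2) (use assms in auto)
  finally show ?thesis .
qed

lemma blk_of_eqI:
  assumes "d dvd k" and "blk_off k d \<le> r" and "r < blk_off k d + totient d"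
  shows "blk_of k r = d"
  unfolding blk_of_def
proof (rule the_equality)
  fix d' assume d': "d' dvd k \<and> blk_off k d' \<le> r \<and> r < blk_off k d' + totient d'"
  show "d' = d"
  proof (rule ccontr)
    assume "d' \<noteq> d"
    then consider "d' < d" | "d < d'" by linarith
    then show False
    proof cases
      case 1 then show False using blk_off_add_totient_le[of d' k d] d' assms by linarith
    next
      case 2 then show False using blk_off_add_totient_le[of d k d'] d' assms by linarith
    qed
  qed
qed (use assms in auto)

lemma dvd_prime_power_Suc_less_iff:
  fixes p x d :: nat
  assumes p: "prime p" and "d \<le> p ^ e"
  shows "x dvd p ^ Suc e \<and> x < d \<longleftrightarrow> x dvd p ^ e \<and> x < d"
proof -
  have "x dvd p ^ e" if x: "x dvd p ^ Suc e" "x < d"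
  proof -
    obtain j where j: "j \<le> Suc e" "x = p ^ j"
      using divides_primepow_nat[OF p, of x "Suc e"] x(1) by blast
    have "p ^ e < p ^ Suc e" using prime_gt_1_nat[OF p] by simp
    then have "x < p ^ Suc e" using x(2) assms(2) by linarith
    then have "j \<le> e" using j by (cases "j = Suc e") auto
    then show ?thesis using j(2) le_imp_power_dvd by blast
  qed
  moreover have "x dvd p ^ Suc e" if "x dvd p ^ e"
    using dvd_trans[OF that le_imp_power_dvd[of e "Suc e" p]] by simp
  ultimately show ?thesis by blast
qed

lemma blk_off_prime_power_Suc:
  assumes p: "prime p" and d: "d dvd p ^ e"
  shows "blk_off (p ^ Suc e) d = blk_off (p ^ e) d"
proof -
  have "d \<le> p ^ e" using d dvd_imp_le prime_gt_0_nat[OF p] by auto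
  then have "{d'. d' dvd p ^ Suc e \<and> d' < d} = {d'. d' dvd p ^ e \<and> d' < d}"
    using dvd_prime_power_Suc_less_iff[OF p] by blast
  then show ?thesis unfolding blk_off_def by simp
qed

lemma blk_off_prime_power_self:
  assumes p: "prime p"
  shows "blk_off (p ^ Suc e) (p ^ Suc e) = p ^ e"
proof -
  have "{d'. d' dvd p ^ Suc e \<and> d' < p ^ Suc e} = {d'. d' dvd p ^ e}"
  proof (intro Set.set_eqI iffI)
    fix x assume x: "x \<in> {d'. d' dvd p ^ Suc e \<and> d' < p ^ Suc e}"
    then obtain j where j: "j \<le> Suc e" "x = p ^ j"
      using divides_primepow_nat[OF p, of x "Suc e"] by blast
    then have "j \<noteq> Suc e" using x by auto
    then show "x \<in> {d'. d' dvd p ^ e}" using j by (simp add: le_imp_power_dvd)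
  next
    fix x assume "x \<in> {d'. d' dvd p ^ e}"
    then have x: "x dvd p ^ e" by simp
    then have "x \<le> p ^ e" using dvd_imp_le prime_gt_0_nat[OF p] by auto
    also have "\<dots> < p ^ Suc e" using prime_gt_1_nat[OF p] by simp
    finally show "x \<in> {d'. d' dvd p ^ Suc e \<and> d' < p ^ Suc e}"
      using x by (auto intro: dvd_trans[of x "p ^ e"] simp: le_imp_power_dvd)
  qed
  then show ?thesis unfolding blk_off_def by (simp add: totient_divisor_sum)
qed

lemma totient_prime_power_Suc_eq_diff:
  assumes "prime p"
  shows "totient (p ^ Suc e) = p ^ Suc e - p ^ e"
  using totient_prime_power_Suc[OF assms, of e] by (simp add: diff_mult_distrib2 mult.commute)

lemma blk_prime_power_exists:
  assumes p: "prime p" and "r < p ^ e"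
  shows "\<exists>d. d dvd p ^ e \<and> blk_off (p ^ e) d \<le> r \<and> r < blk_off (p ^ e) d + totient d"
  using assms(2)
proof (induction e)
  case 0
  have "blk_off 1 1 = 0" unfolding blk_off_def by simp
  then show ?case using 0 by (intro exI[of _ 1]) simp
next
  case (Suc e)
  show ?case
  proof (cases "r < p ^ e")
    case True
    with Suc.IH obtain d where d: "d dvd p ^ e" "blk_off (p ^ e) d \<le> r" "r < blk_off (p ^ e) d + totient d"
      by blast
    then show ?thesis using blk_off_prime_power_Suc[OF p d(1)]
      by (intro exI[of _ d]) (auto intro: dvd_trans[of d "p ^ e"] simp: le_imp_power_dvd)
  next
    case False
    then show ?thesis
      using Suc.prems blk_off_prime_power_self[OF p, of e] totient_prime_power_Suc_eq_diff[OF p, of e]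
      by (intro exI[of _ "p ^ Suc e"]) auto
  qed
qed

section \<open>Block structure of \<open>A_mat (p ^ (e + 1))\<close>\<close>

lemma A_mat_dims [simp]: "dim_row (A_mat k) = k" "dim_col (A_mat k) = k"
  by (simp_all add: A_mat_def)

lemma A_mat_carrier [simp]: "A_mat k \<in> carrier_mat k k"
  by (rule carrier_matI) simp_all

lemma A_mat_prime_power_Suc_upper:
  assumes p: "prime p" and r: "r < p ^ e" and j: "j < p ^ Suc e"
  shows "A_mat (p ^ Suc e) $$ (r, j) = A_mat (p ^ e) $$ (r, j mod p ^ e)"
proof -
  have pe: "p ^ e > 0" using prime_gt_0_nat[OF p] by simp
  have "p ^ e < p ^ Suc e" using prime_gt_1_nat[OF p] by simp
  then have r': "r < p ^ Suc e" using r by linarith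
  obtain d where d: "d dvd p ^ e" "blk_off (p ^ e) d \<le> r" "r < blk_off (p ^ e) d + totient d"
    using blk_prime_power_exists[OF p r] by blast
  have blk: "blk_of (p ^ e) r = d" by (rule blk_of_eqI[OF d])
  have off: "blk_off (p ^ Suc e) d = blk_off (p ^ e) d" by (rule blk_off_prime_power_Suc[OF p d(1)])
  have "d dvd p ^ Suc e" using d(1) by (auto intro: dvd_trans[of d "p ^ e"] simp: le_imp_power_dvd)
  then have blk': "blk_of (p ^ Suc e) r = d" by (rule blk_of_eqI) (use d off in auto)
  show ?thesis
    unfolding A_mat_def using r' j r pe blk blk' off red_mod_cyclo_prime_power_monom_mod[OF p d(1), of j]
    by (simp add: Let_def)
qed

lemma A_mat_prime_power_Suc_lower:
  assumes p: "prime p" and t: "t < p ^ Suc e - p ^ e" and j: "j < p ^ Suc e"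
  shows "A_mat (p ^ Suc e) $$ (p ^ e + t, j) = coeff (red_mod (monom 1 j) (geom_poly p (p ^ e))) t"
proof -
  have "p ^ e \<le> p ^ Suc e" using prime_gt_0_nat[OF p] by simp
  then have r: "p ^ e + t < p ^ Suc e" using t by linarith
  have "blk_of (p ^ Suc e) (p ^ e + t) = p ^ Suc e"
    by (rule blk_of_eqI)
       (use blk_off_prime_power_self[OF p, of e] totient_prime_power_Suc_eq_diff[OF p, of e] t in auto)
  then show ?thesis
    unfolding A_mat_def using r j blk_off_prime_power_self[OF p, of e] cyclo_prime_power[OF p, of e]
    by (simp add: Let_def)
qed

lemma coeff_monom_mult_geom_poly:
  assumes m: "m > 0" and b: "b < m"
  shows "coeff (monom 1 b * geom_poly q m :: 'a :: comm_ring_1 poly) t =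
    (if t mod m = b \<and> t div m < q then 1 else 0)"
proof -
  have term_eq: "(if a * m + b = t then 1 else 0) =
      (if a = t div m then (if t mod m = b then 1 else 0) else (0::'a))" for a
  proof -
    have "a * m + b = t \<longleftrightarrow> a = t div m \<and> t mod m = b"
    proof
      assume "a * m + b = t"
      then show "a = t div m \<and> t mod m = b" using m b by auto
    next
      assume "a = t div m \<and> t mod m = b"
      then show "a * m + b = t" by (metis div_mult_mod_eq)
    qed
    then show ?thesis by auto
  qed
  have "coeff (monom 1 b * geom_poly q m :: 'a poly) t = (\<Sum>a<q. if a * m + b = t then 1 else 0)"
    unfolding geom_poly_def sum_distrib_left coeff_sum by (simp add: mult_monom coeff_monom add.commute)
  also have "\<dots> = (if t div m < q then (if t mod m = b then 1 else 0) else 0)"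
    unfolding term_eq by (simp add: sum.delta)
  finally show ?thesis by auto
qed

lemma red_mod_geom_poly_monom_less:
  assumes p: "p > 1" and m: "m > 0" and j: "j < (p - 1) * m"
  shows "red_mod (monom 1 j) (geom_poly p m) = monom 1 j"
proof (rule red_mod_unique[of _ _ 0])
  have "degree (geom_poly p m :: int poly) = (p - 1) * m" "lead_coeff (geom_poly p m :: int poly) = 1"
    using degree_geom_poly[OF m, of p] p by auto
  then show "lead_coeff (geom_poly p m :: int poly) = 1"
    and "monom 1 j = 0 \<or> degree (monom (1 :: int) j) < degree (geom_poly p m :: int poly)"
    using j by (auto simp: degree_monom_eq)
qed simp

lemma geom_poly_Suc: "geom_poly (Suc q) m = geom_poly q m + monom 1 (q * m)"
  by (simp add: geom_poly_def)

lemma red_mod_geom_poly_monom_top: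
  assumes p: "p > 1" and m: "m > 0" and b: "b < m"
  shows "red_mod (monom 1 ((p - 1) * m + b)) (geom_poly p m) = - (monom 1 b * geom_poly (p - 1) m)"
proof (rule red_mod_unique)
  show "lead_coeff (geom_poly p m :: int poly) = 1" using degree_geom_poly(2)[OF m, of p] p by simp
  obtain q where q: "p = Suc q" using p by (cases p) auto
  have shift: "geom_poly p m * monom 1 b = monom 1 b * geom_poly (p - 1) m + monom (1::int) ((p - 1) * m + b)"
    unfolding q geom_poly_Suc by (simp add: ring_distribs mult_monom mult.commute add.commute)
  show "monom 1 ((p - 1) * m + b) = geom_poly p m * monom 1 b + - (monom 1 b * geom_poly (p - 1) m :: int poly)"
    unfolding shift by simp
  have "coeff (monom 1 b * geom_poly (p - 1) m :: int poly) k = 0" if "(p - 1) * m \<le> k" for k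
  proof -
    have "\<not> k div m < p - 1" using that m by (simp add: div_less_iff_less_mult)
    then show ?thesis by (simp add: coeff_monom_mult_geom_poly[OF m b])
  qed
  then have "degree (monom 1 b * geom_poly (p - 1) m :: int poly) < (p - 1) * m"
    using p m by (intro degree_lessI) auto
  then show "- (monom 1 b * geom_poly (p - 1) m :: int poly) = 0 \<or>
      degree (- (monom 1 b * geom_poly (p - 1) m :: int poly)) < degree (geom_poly p m :: int poly)"
    using degree_geom_poly(1)[OF m, of p, where 'a = int] p by simp
qed

(* The blocks A' and C of the decomposition A_(p^(e+1)) = [[A', A_(p^e)], [I, -C]]. *)
definition A_mat_rep :: "nat \<Rightarrow> nat \<Rightarrow> int mat" where
  "A_mat_rep p e = mat (p ^ e) ((p - 1) * p ^ e) (\<lambda>(r, j). A_mat (p ^ e) $$ (r, j mod p ^ e))"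

definition stacked_one_mat :: "nat \<Rightarrow> nat \<Rightarrow> int mat" where
  "stacked_one_mat p e = mat ((p - 1) * p ^ e) (p ^ e) (\<lambda>(i, b). if i mod p ^ e = b then 1 else 0)"

lemma A_mat_prime_power_Suc_blocks:
  assumes p: "prime p"
  shows "A_mat (p ^ Suc e) = four_block_mat (A_mat_rep p e) (A_mat (p ^ e))
    (1\<^sub>m ((p - 1) * p ^ e)) (- stacked_one_mat p e)"
    (is "_ = ?B")
proof -
  define m where "m = p ^ e"
  define s where "s = (p - 1) * m"
  have p1: "p > 1" using p prime_gt_1_nat by blast
  have m0: "m > 0" using p1 by (simp add: m_def)
  have N: "p ^ Suc e = m + s" using p1 by (simp add: m_def s_def algebra_simps)
  have "?B \<in> carrier_mat (m + s) (s + m)"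
    by (rule four_block_carrier_mat) (simp_all add: A_mat_rep_def stacked_one_mat_def m_def s_def)
  then have dims: "?B \<in> carrier_mat (m + s) (m + s)" by (simp add: add.commute)
  show ?thesis
  proof (rule eq_matI)
    fix i j assume "i < dim_row ?B" "j < dim_col ?B"
    then have i: "i < m + s" and j: "j < m + s" using dims by auto
    have jN: "j < p ^ Suc e" using j N by simp
    have B: "?B $$ (i, j) = (if i < m then if j < s then A_mat_rep p e $$ (i, j) else A_mat m $$ (i, j - s)
       else if j < s then 1\<^sub>m s $$ (i - m, j) else - stacked_one_mat p e $$ (i - m, j - s))"
      using i j by (simp add: A_mat_rep_def stacked_one_mat_def m_def s_def)
    show "A_mat (p ^ Suc e) $$ (i, j) = ?B $$ (i, j)"
    proof (cases "i < m")
      case True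
      then have "A_mat (p ^ Suc e) $$ (i, j) = A_mat m $$ (i, j mod m)"
        using A_mat_prime_power_Suc_upper[OF p _ jN, of i] by (simp add: m_def)
      moreover have "j mod m = j - s" if "\<not> j < s"
      proof -
        have "j = (j - s) + (p - 1) * m" "j - s < m" using that j by (simp_all add: s_def)
        then show ?thesis by (metis mod_mult_self1 mod_less)
      qed
      ultimately show ?thesis using B True j
        by (auto simp: A_mat_rep_def m_def s_def)
    next
      case False
      define t where "t = i - m"
      have t: "i = m + t" "t < s" using i False by (auto simp: t_def)
      have lower: "A_mat (p ^ Suc e) $$ (i, j) = coeff (red_mod (monom 1 j) (geom_poly p m)) t"
        using A_mat_prime_power_Suc_lower[OF p _ jN, of t] t N by (simp add: m_def)
      show ?thesis
      proof (cases "j < s")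
        case True
        have "red_mod (monom 1 j) (geom_poly p m) = monom 1 j"
          using red_mod_geom_poly_monom_less[OF p1 m0] True by (simp add: s_def)
        then show ?thesis using lower B False True t by (auto simp: coeff_monom)
      next
        case False2: False
        define b where "b = j - s"
        have b: "j = s + b" "b < m" using j False2 by (auto simp: b_def)
        have "red_mod (monom 1 j) (geom_poly p m) = - (monom 1 b * geom_poly (p - 1) m)"
          using red_mod_geom_poly_monom_top[OF p1 m0 b(2)] b by (simp add: s_def add.commute)
        moreover have "t div m < p - 1" using t m0 by (simp add: s_def div_less_iff_less_mult)
        ultimately have "A_mat (p ^ Suc e) $$ (i, j) = (if t mod m = b then -1 else 0)"
          using lower coeff_monom_mult_geom_poly[OF m0 b(2), of "p - 1" t, where 'a = int] by simp
        then show ?thesis using B False False2 t b by (simp add: stacked_one_mat_def m_def s_def)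
      qed
    qed
  qed (use dims N in auto)
qed

lemma card_mod_eq_lessThan_mult:
  assumes m: "m > 0" and b: "b < m"
  shows "card {i. i < k * m \<and> i mod m = b} = k"
proof -
  have "{i. i < k * m \<and> i mod m = b} = (\<lambda>a. a * m + b) ` {..<k}"
  proof (intro Set.set_eqI iffI)
    fix i assume i: "i \<in> {i. i < k * m \<and> i mod m = b}"
    then have im: "i mod m = b" by simp
    have "i div m * m + i mod m = i" by (rule div_mult_mod_eq)
    then have "i = (i div m) * m + b" using im by simp
    moreover have "i div m < k" using i m by (simp add: div_less_iff_less_mult)
    ultimately show "i \<in> (\<lambda>a. a * m + b) ` {..<k}" by blast
  next
    fix i assume "i \<in> (\<lambda>a. a * m + b) ` {..<k}"
    then obtain a where a: "a < k" "i = a * m + b" by auto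
    have "a * m + b < (a + 1) * m" using b by simp
    also have "\<dots> \<le> k * m" using a by (intro mult_le_mono1) simp
    finally show "i \<in> {i. i < k * m \<and> i mod m = b}" using a b by simp
  qed
  moreover have "inj_on (\<lambda>a. a * m + b) {..<k}" using m by (auto simp: inj_on_def)
  ultimately show ?thesis by (simp add: card_image)
qed

\<comment> \<open>Right multiplication by \<open>stacked_one_mat\<close> adds up the \<open>p - 1\<close> copies of each column.\<close>
lemma A_mat_rep_mult_stacked_one:
  assumes p: "prime p"
  shows "A_mat_rep p e * stacked_one_mat p e + A_mat (p ^ e) = of_nat p \<cdot>\<^sub>m A_mat (p ^ e)"
proof (rule eq_matI)
  define m where "m = p ^ e"
  have p1: "p > 1" using p prime_gt_1_nat by blast
  have m0: "m > 0" using p1 by (simp add: m_def)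
  fix r b assume "r < dim_row (of_nat p \<cdot>\<^sub>m A_mat (p ^ e))" "b < dim_col (of_nat p \<cdot>\<^sub>m A_mat (p ^ e))"
  then have r: "r < m" and b: "b < m" by (auto simp: m_def)
  have "(A_mat_rep p e * stacked_one_mat p e) $$ (r, b) =
      (\<Sum>i\<in>{0..<(p - 1) * m}. A_mat m $$ (r, i mod m) * (if i mod m = b then 1 else 0))"
    using r b by (simp add: A_mat_rep_def stacked_one_mat_def m_def scalar_prod_def)
  also have "\<dots> = (\<Sum>i\<in>{0..<(p - 1) * m}. if i mod m = b then A_mat m $$ (r, b) else 0)"
    by (rule sum.cong) auto
  also have "\<dots> = of_nat (card {i. i < (p - 1) * m \<and> i mod m = b}) * A_mat m $$ (r, b)"
    by (simp add: sum.If_cases Int_def)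
  also have "\<dots> = of_nat (p - 1) * A_mat m $$ (r, b)" using card_mod_eq_lessThan_mult[OF m0 b] by simp
  finally show "(A_mat_rep p e * stacked_one_mat p e + A_mat (p ^ e)) $$ (r, b) =
      (of_nat p \<cdot>\<^sub>m A_mat (p ^ e)) $$ (r, b)"
    using r b p1 by (simp add: m_def A_mat_rep_def stacked_one_mat_def of_nat_diff algebra_simps)
qed (auto simp: A_mat_rep_def stacked_one_mat_def)

lemma A_mat_prime_power_Suc_mult_shear:
  fixes p e :: nat
  assumes p: "prime p"
  defines "m \<equiv> p ^ e" and "s \<equiv> (p - 1) * p ^ e"
  shows "A_mat (p ^ Suc e) * four_block_mat (1\<^sub>m s) (stacked_one_mat p e) (0\<^sub>m m s) (1\<^sub>m m) =
    four_block_mat (A_mat_rep p e) (of_nat p \<cdot>\<^sub>m A_mat m) (1\<^sub>m s) (0\<^sub>m s m)"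
proof -
  have A_rep: "A_mat_rep p e \<in> carrier_mat m s" and C: "stacked_one_mat p e \<in> carrier_mat s m"
    by (simp_all add: A_mat_rep_def stacked_one_mat_def m_def s_def)
  have blocks: "A_mat (p ^ Suc e) = four_block_mat (A_mat_rep p e) (A_mat m) (1\<^sub>m s) (- stacked_one_mat p e)"
    unfolding m_def s_def by (rule A_mat_prime_power_Suc_blocks[OF p])
  have "A_mat (p ^ Suc e) * four_block_mat (1\<^sub>m s) (stacked_one_mat p e) (0\<^sub>m m s) (1\<^sub>m m) =
      four_block_mat (A_mat_rep p e * 1\<^sub>m s + A_mat m * 0\<^sub>m m s)
        (A_mat_rep p e * stacked_one_mat p e + A_mat m * 1\<^sub>m m)
        (1\<^sub>m s * 1\<^sub>m s + - stacked_one_mat p e * 0\<^sub>m m s)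
        (1\<^sub>m s * stacked_one_mat p e + - stacked_one_mat p e * 1\<^sub>m m)"
    unfolding blocks by (rule mult_four_block_mat[OF A_rep A_mat_carrier one_carrier_mat uminus_carrier_mat[OF C]
      one_carrier_mat C zero_carrier_mat one_carrier_mat])
  also have "\<dots> = four_block_mat (A_mat_rep p e) (A_mat_rep p e * stacked_one_mat p e + A_mat m)
      (1\<^sub>m s) (stacked_one_mat p e + - stacked_one_mat p e)"
    using A_rep C by (simp add: right_add_zero_mat[OF A_rep] right_add_zero_mat[OF one_carrier_mat])
  also have "\<dots> = four_block_mat (A_mat_rep p e) (of_nat p \<cdot>\<^sub>m A_mat m) (1\<^sub>m s) (0\<^sub>m s m)"
    using A_mat_rep_mult_stacked_one[OF p, of e] C unfolding m_def by (simp add: add_uminus_minus_mat)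
  finally show ?thesis .
qed

lemma A_mat_prime_power_Suc_equiv:
  fixes p e :: nat
  assumes p: "prime p"
  defines "m \<equiv> p ^ e" and "s \<equiv> (p - 1) * p ^ e"
  shows "unimod_equiv (s + m) (A_mat (p ^ Suc e))
    (four_block_mat (1\<^sub>m s) (0\<^sub>m s m) (0\<^sub>m m s) (of_nat p \<cdot>\<^sub>m A_mat m))"
proof -
  define Q where "Q = four_block_mat (1\<^sub>m s) (stacked_one_mat p e) (0\<^sub>m m s) (1\<^sub>m m)"
  define Q' where "Q' = four_block_mat (1\<^sub>m s) (- stacked_one_mat p e) (0\<^sub>m m s) (1\<^sub>m m)"
  have C: "stacked_one_mat p e \<in> carrier_mat s m" by (simp add: stacked_one_mat_def m_def s_def)
  have N: "p ^ Suc e = s + m" using prime_gt_0_nat[OF p] by (cases p) (simp_all add: m_def s_def)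
  have A: "A_mat (p ^ Suc e) \<in> carrier_mat (s + m) (s + m)" unfolding N by simp
  have "unimod_equiv (s + m) (A_mat (p ^ Suc e)) (A_mat (p ^ Suc e) * Q)"
    unfolding unimod_equiv_def using C four_block_unitriangular_inverse[OF C] left_mult_one_mat[OF A]
    by (intro exI[of _ "1\<^sub>m (s + m)"] exI[of _ Q] exI[of _ Q']) (auto simp: Q_def Q'_def)
  also have "A_mat (p ^ Suc e) * Q = four_block_mat (A_mat_rep p e) (of_nat p \<cdot>\<^sub>m A_mat m) (1\<^sub>m s) (0\<^sub>m s m)"
    unfolding Q_def m_def s_def by (rule A_mat_prime_power_Suc_mult_shear[OF p])
  finally have "unimod_equiv (s + m) (A_mat (p ^ Suc e))
      (four_block_mat (A_mat_rep p e) (of_nat p \<cdot>\<^sub>m A_mat m) (1\<^sub>m s) (0\<^sub>m s m))" .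
  moreover have "unimod_equiv (s + m)
      (four_block_mat (A_mat_rep p e) (of_nat p \<cdot>\<^sub>m A_mat m) (1\<^sub>m s) (0\<^sub>m s m))
      (four_block_mat (1\<^sub>m s) (0\<^sub>m s m) (0\<^sub>m m s) (of_nat p \<cdot>\<^sub>m A_mat m))"
    by (rule unimod_equiv_four_block_eliminate) (simp_all add: A_mat_rep_def m_def s_def)
  ultimately show ?thesis by (rule unimod_equiv_trans[OF A])
qed

section \<open>The Smith form of \<open>A_mat (p ^ e)\<close>\<close>

fun smith_diag :: "nat \<Rightarrow> nat \<Rightarrow> nat \<Rightarrow> int" where
  "smith_diag p 0 i = 1"
| "smith_diag p (Suc e) i =
    (if i < (p - 1) * p ^ e then 1 else int p * smith_diag p e (i - (p - 1) * p ^ e))"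

fun smith_diag_mat :: "nat \<Rightarrow> nat \<Rightarrow> int mat" where
  "smith_diag_mat p 0 = 1\<^sub>m 1"
| "smith_diag_mat p (Suc e) = four_block_mat (1\<^sub>m ((p - 1) * p ^ e)) (0\<^sub>m ((p - 1) * p ^ e) (p ^ e))
    (0\<^sub>m (p ^ e) ((p - 1) * p ^ e)) (of_nat p \<cdot>\<^sub>m smith_diag_mat p e)"

lemma prime_power_Suc_split: "(p :: nat) > 0 \<Longrightarrow> (p - 1) * p ^ e + p ^ e = p ^ Suc e"
  by (cases p) (auto simp: algebra_simps)

lemma smith_diag_mat_carrier: "p > 0 \<Longrightarrow> smith_diag_mat p e \<in> carrier_mat (p ^ e) (p ^ e)"
proof (induction e)
  case (Suc e)
  then have "smith_diag_mat p (Suc e) \<in> carrier_mat ((p - 1) * p ^ e + p ^ e) ((p - 1) * p ^ e + p ^ e)"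
    by simp
  then show ?case using prime_power_Suc_split[OF Suc.prems, of e] by simp
qed simp

lemma smith_diag_mat_index:
  assumes "p > 0" "i < p ^ e" "j < p ^ e"
  shows "smith_diag_mat p e $$ (i, j) = (if i = j then smith_diag p e i else 0)"
  using assms(2,3)
proof (induction e arbitrary: i j)
  case (Suc e)
  define s where "s = (p - 1) * p ^ e"
  have ij: "i < s + p ^ e" "j < s + p ^ e"
    using Suc.prems prime_power_Suc_split[OF assms(1), of e] by (auto simp: s_def)
  have "smith_diag_mat p (Suc e) $$ (i, j) = (if i < s then if j < s then 1\<^sub>m s $$ (i, j) else 0 else
      if j < s then 0 else of_nat p * smith_diag_mat p e $$ (i - s, j - s))"
    using ij smith_diag_mat_carrier[OF assms(1), of e] by (simp add: s_def)
  also have "\<dots> = (if i = j then smith_diag p (Suc e) i else 0)"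
  proof (cases "i < s \<or> j < s")
    case False
    then have "i - s < p ^ e" "j - s < p ^ e" "i - s = j - s \<longleftrightarrow> i = j" using ij by auto
    then show ?thesis using Suc.IH[of "i - s" "j - s"] False by (auto simp: s_def)
  qed (auto simp: s_def)
  finally show ?case .
qed simp

lemma smith_diag_pos: "p > 0 \<Longrightarrow> smith_diag p e i > 0"
  by (induction e arbitrary: i) auto

lemma smith_diag_dvd_mono:
  assumes "p > 0" "i \<le> j" "j < p ^ e"
  shows "smith_diag p e i dvd smith_diag p e j"
  using assms(2,3)
proof (induction e arbitrary: i j)
  case (Suc e)
  define s where "s = (p - 1) * p ^ e"
  have step: "smith_diag p (Suc e) k = (if k < s then 1 else int p * smith_diag p e (k - s))" for k
    by (simp add: s_def)
  show ?case
  proof (cases "i < s")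
    case False
    then have "\<not> j < s" "j - s < p ^ e" "i - s \<le> j - s"
      using Suc.prems prime_power_Suc_split[OF assms(1), of e] by (auto simp: s_def)
    then show ?thesis using Suc.IH[of "i - s" "j - s"] False by (simp del: smith_diag.simps add: step)
  qed (simp del: smith_diag.simps add: step)
qed simp

lemma image_mset_sum: "image_mset f (\<Sum>i\<in>A. g i) = (\<Sum>i\<in>A. image_mset f (g i))"
  by (induction A rule: infinite_finite_induct) auto

lemma mset_smith_diag:
  assumes p: "prime p"
  shows "mset (map (smith_diag p e) [0..<p ^ e]) =
    (\<Sum>i\<in>{0..e}. replicate_mset (totient (p ^ (e - i))) (int p ^ i))"
proof (induction e)
  case (Suc e)
  define s where "s = (p - 1) * p ^ e"
  define m where "m = p ^ e"
  have N: "p ^ Suc e = s + m"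
    using prime_power_Suc_split[OF prime_gt_0_nat[OF p], of e] by (simp add: s_def m_def)
  have "[0..<p ^ Suc e] = [0..<s] @ map (\<lambda>i. i + s) [0..<m]"
    unfolding N upt_add_eq_append[OF le0] by (simp add: map_add_upt add.commute)
  moreover have "map (smith_diag p (Suc e)) [0..<s] = replicate s 1"
    by (rule nth_equalityI) (auto simp: s_def)
  moreover have "map (\<lambda>i. smith_diag p (Suc e) (i + s)) [0..<m] = map (\<lambda>x. int p * x) (map (smith_diag p e) [0..<m])"
    by (simp add: s_def)
  ultimately have "map (smith_diag p (Suc e)) [0..<p ^ Suc e] =
      replicate s 1 @ map (\<lambda>x. int p * x) (map (smith_diag p e) [0..<m])"
    by simp
  then have "mset (map (smith_diag p (Suc e)) [0..<p ^ Suc e]) =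
      replicate_mset s 1 + image_mset (\<lambda>x. int p * x) (mset (map (smith_diag p e) [0..<p ^ e]))"
    unfolding m_def by (simp only: mset_append mset_replicate mset_map)
  also have "\<dots> = replicate_mset (totient (p ^ Suc e)) 1 + image_mset (\<lambda>x. int p * x)
      (\<Sum>i\<in>{0..e}. replicate_mset (totient (p ^ (e - i))) (int p ^ i))"
    unfolding Suc.IH totient_prime_power_Suc[OF p] s_def by (simp only: mult.commute)
  also have "\<dots> = (\<Sum>i\<in>{0..Suc e}. replicate_mset (totient (p ^ (Suc e - i))) (int p ^ i))"
    by (subst sum.atLeast0_atMost_Suc_shift) (simp add: o_def image_mset_sum)
  finally show ?case .
qed simp

lemma A_mat_1: "A_mat 1 = 1\<^sub>m 1"
proof (rule eq_matI)
  fix i j assume "i < dim_row (1\<^sub>m 1 :: int mat)" "j < dim_col (1\<^sub>m 1 :: int mat)"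
  then have ij: "i = 0" "j = 0" by auto
  have "{d'. d' dvd (1 :: nat) \<and> d' < 1} = {}" by auto
  then have off: "blk_off (Suc 0) (Suc 0) = 0" unfolding blk_off_def by simp
  have "blk_of 1 0 = 1" by (rule blk_of_eqI) (simp_all add: off)
  moreover have "red_mod (monom 1 0) (cyclo 1) = 1"
    using cyclo_1 by (intro red_mod_unique[of _ _ 0]) (simp_all add: monom_0)
  ultimately show "A_mat 1 $$ (i, j) = 1\<^sub>m 1 $$ (i, j)"
    unfolding A_mat_def using ij off by (simp add: Let_def)
qed simp_all

lemma A_mat_prime_power_equiv_smith_diag_mat:
  assumes p: "prime p"
  shows "unimod_equiv (p ^ e) (A_mat (p ^ e)) (smith_diag_mat p e)"
proof (induction e)
  case 0
  then show ?case using A_mat_1 unimod_equiv_refl[of "1\<^sub>m 1" 1] by simp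
next
  case (Suc e)
  define s where "s = (p - 1) * p ^ e"
  define m where "m = p ^ e"
  have N: "p ^ Suc e = s + m"
    using prime_power_Suc_split[OF prime_gt_0_nat[OF p], of e] by (simp add: s_def m_def)
  have "unimod_equiv m (of_nat p \<cdot>\<^sub>m A_mat m) (of_nat p \<cdot>\<^sub>m smith_diag_mat p e)"
    by (rule unimod_equiv_smult[OF A_mat_carrier]) (use Suc.IH in \<open>simp add: m_def\<close>)
  then have "unimod_equiv (s + m) (four_block_mat (1\<^sub>m s) (0\<^sub>m s m) (0\<^sub>m m s) (of_nat p \<cdot>\<^sub>m A_mat m))
      (four_block_mat (1\<^sub>m s) (0\<^sub>m s m) (0\<^sub>m m s) (of_nat p \<cdot>\<^sub>m smith_diag_mat p e))"
    by (intro unimod_equiv_four_block_one) simp_all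
  then have "unimod_equiv (s + m) (four_block_mat (1\<^sub>m s) (0\<^sub>m s m) (0\<^sub>m m s) (of_nat p \<cdot>\<^sub>m A_mat m))
      (smith_diag_mat p (Suc e))"
    by (simp only: s_def m_def smith_diag_mat.simps)
  moreover have "unimod_equiv (s + m) (A_mat (p ^ Suc e))
      (four_block_mat (1\<^sub>m s) (0\<^sub>m s m) (0\<^sub>m m s) (of_nat p \<cdot>\<^sub>m A_mat m))"
    unfolding s_def m_def by (rule A_mat_prime_power_Suc_equiv[OF p])
  moreover have "A_mat (p ^ Suc e) \<in> carrier_mat (s + m) (s + m)" unfolding N[symmetric] by simp
  ultimately show ?case unfolding N using unimod_equiv_trans by blast
qed

lemma smith_nf_A_mat_prime_power:
  assumes p: "prime p"
  shows "smith_nf (A_mat (p ^ e)) (smith_diag_mat p e)"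
proof -
  have p0: "p > 0" using prime_gt_0_nat[OF p] .
  note index = smith_diag_mat_index[OF p0]
  show ?thesis
  proof (rule smith_nfI[OF A_mat_carrier A_mat_prime_power_equiv_smith_diag_mat[OF p]
        smith_diag_mat_carrier[OF p0]])
    show "0 \<le> smith_diag_mat p e $$ (i, i)" if "i < p ^ e" for i
      using that smith_diag_pos[OF p0, of e i] by (simp add: index)
    show "smith_diag_mat p e $$ (i, i) dvd smith_diag_mat p e $$ (i + 1, i + 1)" if "i + 1 < p ^ e" for i
      using that smith_diag_dvd_mono[OF p0, of i "i + 1" e] by (simp add: index)
  qed (simp add: index)
qed

lemma elem_divs_smith_diag_mat:
  assumes p: "prime p"
  shows "elem_divs (smith_diag_mat p e) = (\<Sum>i\<in>{0..e}. replicate_mset (totient (p ^ (e - i))) (int p ^ i))"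
proof -
  have p0: "p > 0" using prime_gt_0_nat[OF p] .
  have "dim_row (smith_diag_mat p e) = p ^ e" "dim_col (smith_diag_mat p e) = p ^ e"
    using smith_diag_mat_carrier[OF p0, of e] by auto
  then have "elem_divs (smith_diag_mat p e) = mset (map (\<lambda>i. smith_diag_mat p e $$ (i, i)) [0..<p ^ e])"
    by (simp only: elem_divs_def min.idem)
  also have "map (\<lambda>i. smith_diag_mat p e $$ (i, i)) [0..<p ^ e] = map (smith_diag p e) [0..<p ^ e]"
    by (intro map_cong) (simp_all add: smith_diag_mat_index[OF p0])
  finally show ?thesis by (simp only: mset_smith_diag[OF p])
qed

theorem theorem2p6:
  fixes p e :: nat
  assumes "prime p" and "e > 0"
  shows "(\<exists>D. smith_nf (A_mat (p ^ e)) D) \<and>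
    (\<forall>D. smith_nf (A_mat (p ^ e)) D \<longrightarrow>
       elem_divs D = (\<Sum>i\<in>{0..e}. replicate_mset (totient (p ^ (e - i))) (int p ^ i)))"
proof -
  have p0: "p > 0" using prime_gt_0_nat[OF assms(1)] .
  have S: "smith_nf (A_mat (p ^ e)) (smith_diag_mat p e)"
    by (rule smith_nf_A_mat_prime_power[OF assms(1)])
  have "elem_divs D = (\<Sum>i\<in>{0..e}. replicate_mset (totient (p ^ (e - i))) (int p ^ i))"
    if "smith_nf (A_mat (p ^ e)) D" for D
  proof -
    have "elem_divs D = elem_divs (smith_diag_mat p e)"
    proof (rule smith_nf_elem_divs_unique[OF A_mat_carrier S that])
      show "smith_diag_mat p e $$ (i, i) \<noteq> 0" if "i < p ^ e" for i
        using smith_diag_pos[OF p0, of e i] that by (simp add: smith_diag_mat_index[OF p0])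
    qed
    then show ?thesis by (simp only: elem_divs_smith_diag_mat[OF assms(1)])
  qed
  with S show ?thesis by blast
qed

end
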